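(* Let $\eta>0,\lambda>0$ with $\eta\lambda<1$, let $x(t)\ne0$ and $x(t+1)=(1-\eta\lambda)x(t)-\eta\nabla L(x(t))$. Then $$L(x(t))-L(x(t+1))\ge \eta\left(\frac{1}{1-\eta\lambda}-\frac{\rho\eta}{2\|x(t)\|_2^2(1-\eta\lambda)^2}\right)\|\nabla L(x(t))\|_2^2 .$$ If moreover $\eta\lambda\le\tfrac12$, then $$L(x(t))-L(x(t+1))\ge \eta\left(1-\frac{2\rho\eta}{\|x(t)\|_2^2}\right)\|\nabla L(x(t))\|_2^2 .$$
   Context: $L:\mathbb{R}^d\setminus\{0\}\to\mathbb{R}$ is $C^2$ and scale invariant, i.e. $L(cx)=L(x)$ for all $c>0$ and $x\neq0$. $\rho:=\max_{\|x\|_2=1}\|\nabla^2L(x)\|_2$ (spectral norm). *)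

theory Defs
  imports "HOL-Analysis.Analysis"
begin

text \<open>L is C^2 on the open set S, with gradient G and Hessian H (as a bounded linear
operator, so that norm (H x) is the operator = spectral norm); the Hessian is continuous.\<close>
definition C2_on :: "'a::euclidean_space set \<Rightarrow> ('a \<Rightarrow> real) \<Rightarrow> ('a \<Rightarrow> 'a) \<Rightarrow> ('a \<Rightarrow> 'a \<Rightarrow>\<^sub>L 'a) \<Rightarrow> bool" where
  "C2_on S L G H \<longleftrightarrow> open S \<and> (\<forall>x\<in>S. GDERIV L x :> G x)
     \<and> (\<forall>x\<in>S. (G has_derivative blinfun_apply (H x)) (at x)) \<and> continuous_on S H"

definition scale_invariant :: "('a::real_vector \<Rightarrow> real) \<Rightarrow> bool" where
  "scale_invariant L \<longleftrightarrow> (\<forall>c x. c > 0 \<longrightarrow> x \<noteq> 0 \<longrightarrow> L (c *\<^sub>R x) = L x)"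

definition hess_bound :: "('a::euclidean_space \<Rightarrow> 'a \<Rightarrow>\<^sub>L 'a) \<Rightarrow> real" where
  "hess_bound H = Sup ((\<lambda>x. norm (H x)) ` sphere 0 1)"

end

theory Submission imports Defs begin

text \<open>Differentiating the identity L (c x) = L x in x, and in c at c = 1, shows that the gradient
of a scale-invariant function is orthogonal to x and homogeneous of degree -1, and that its Hessian
is homogeneous of degree -2; hence, with rho = hess_bound H, the Hessian has norm at most
rho / |y|^2 at every y. A gradient step -e G x is orthogonal to x, so the segment from x to
x - e G x stays outside the ball of radius |x|, and the second order Taylor bound along it gives
L x - L (x - e G x) \<ge> e |G x|^2 - rho e^2 |G x|^2 / (2 |x|^2).
Weight decay only rescales the iterate, x' = (1 - eta lam) (x - eta / (1 - eta lam) G x),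
which leaves L unchanged.\<close>

lemma second_order_Taylor_upper_bound:
  fixes L :: "'a::real_inner \<Rightarrow> real" and G :: "'a \<Rightarrow> 'a" and H :: "'a \<Rightarrow> 'a \<Rightarrow>\<^sub>L 'a"
  assumes grad: "\<And>t. 0 \<le> t \<Longrightarrow> t \<le> 1 \<Longrightarrow>
      (L has_derivative (\<lambda>h. h \<bullet> G (x + t *\<^sub>R v))) (at (x + t *\<^sub>R v))"
    and hess: "\<And>t. 0 \<le> t \<Longrightarrow> t \<le> 1 \<Longrightarrow>
      (G has_derivative blinfun_apply (H (x + t *\<^sub>R v))) (at (x + t *\<^sub>R v))"
    and bound: "\<And>t. 0 \<le> t \<Longrightarrow> t \<le> 1 \<Longrightarrow> norm (H (x + t *\<^sub>R v)) \<le> M"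
  shows "L (x + v) \<le> L x + G x \<bullet> v + M / 2 * (norm v)\<^sup>2"
proof -
  define diff :: "nat \<Rightarrow> real \<Rightarrow> real" where
    "diff m = (if m = 0 then (\<lambda>t. L (x + t *\<^sub>R v))
       else if m = 1 then (\<lambda>t. G (x + t *\<^sub>R v) \<bullet> v)
       else (\<lambda>t. H (x + t *\<^sub>R v) v \<bullet> v))" for m
  have line: "((\<lambda>t. x + t *\<^sub>R v) has_derivative (\<lambda>t. t *\<^sub>R v)) (at t)" for t
    by (auto intro!: derivative_eq_intros)
  have "DERIV (\<lambda>t. L (x + t *\<^sub>R v)) t :> G (x + t *\<^sub>R v) \<bullet> v" if "0 \<le> t" "t \<le> 1" for t
  proof -
    have "((\<lambda>t. L (x + t *\<^sub>R v)) has_derivative (\<lambda>s. (s *\<^sub>R v) \<bullet> G (x + t *\<^sub>R v))) (at t)"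
      using has_derivative_compose[OF line grad[OF that]] .
    then show ?thesis
      unfolding has_field_derivative_def
      by (rule has_derivative_eq_rhs) (auto simp: fun_eq_iff inner_commute)
  qed
  moreover have "DERIV (\<lambda>t. G (x + t *\<^sub>R v) \<bullet> v) t :> H (x + t *\<^sub>R v) v \<bullet> v"
    if "0 \<le> t" "t \<le> 1" for t
  proof -
    have "((\<lambda>t. G (x + t *\<^sub>R v) \<bullet> v) has_derivative (\<lambda>s. H (x + t *\<^sub>R v) (s *\<^sub>R v) \<bullet> v)) (at t)"
      using has_derivative_compose[OF line hess[OF that]] by (auto intro!: derivative_eq_intros)
    then show ?thesis
      unfolding has_field_derivative_def
      by (rule has_derivative_eq_rhs) (auto simp: fun_eq_iff blinfun.scaleR_right)
  qed
  ultimately have "\<forall>m t. m < 2 \<and> 0 \<le> t \<and> t \<le> 1 \<longrightarrow> DERIV (diff m) t :> diff (Suc m) t"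
    by (auto simp: diff_def numeral_2_eq_2 less_Suc_eq)
  then obtain t where t: "0 < t" "t < 1"
    and taylor: "L (x + v) = L x + G x \<bullet> v + diff 2 t / 2"
    using Maclaurin[of 1 2 diff "diff 0"] by (auto simp: numeral_2_eq_2 diff_def)
  have "diff 2 t \<le> norm (H (x + t *\<^sub>R v) v) * norm v"
    unfolding diff_def by (simp add: norm_cauchy_schwarz)
  also have "\<dots> \<le> norm (H (x + t *\<^sub>R v)) * norm v * norm v"
    by (intro mult_right_mono norm_blinfun) auto
  also have "\<dots> \<le> M * (norm v)\<^sup>2"
    using bound[of t] t by (auto simp: power2_eq_square mult.assoc intro!: mult_right_mono)
  finally show ?thesis using taylor by simp
qed

lemma norm_le_norm_add_orthogonal:
  fixes x v :: "'a::real_inner"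
  assumes "orthogonal x v"
  shows "norm x \<le> norm (x + v)"
  using norm_add_Pythagorean[OF assms] by (simp add: power2_le_imp_le)

lemma C2_on_gradient:
  assumes "C2_on S L G H" "y \<in> S"
  shows "(L has_derivative (\<lambda>h. h \<bullet> G y)) (at y)"
  using assms unfolding C2_on_def gderiv_def by auto

lemma C2_on_hessian:
  assumes "C2_on S L G H" "y \<in> S"
  shows "(G has_derivative blinfun_apply (H y)) (at y)"
  using assms unfolding C2_on_def by auto

lemma scale_invariant_gradient_orthogonal:
  fixes L :: "'a::euclidean_space \<Rightarrow> real"
  assumes C: "C2_on (- {0}) L G H" and si: "scale_invariant L" and x: "x \<noteq> 0"
  shows "x \<bullet> G x = 0"
proof -
  have line: "((\<lambda>t::real. t *\<^sub>R x) has_derivative (\<lambda>t. t *\<^sub>R x)) (at 1)"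
    by (auto intro!: derivative_eq_intros)
  have "(L has_derivative (\<lambda>h. h \<bullet> G x)) (at ((\<lambda>t::real. t *\<^sub>R x) 1))"
    using C2_on_gradient[OF C] x by simp
  then have "((\<lambda>t. L (t *\<^sub>R x)) has_derivative (\<lambda>t. (t *\<^sub>R x) \<bullet> G x)) (at 1)"
    by (rule has_derivative_compose[OF line])
  moreover have "((\<lambda>t::real. L (t *\<^sub>R x)) has_derivative (\<lambda>t. 0)) (at 1)"
    by (rule has_derivative_transform_within_open[OF has_derivative_const[of "L x"], of "{0<..}"])
      (use si x in \<open>auto simp: scale_invariant_def\<close>)
  ultimately have "(\<lambda>t::real. (t *\<^sub>R x) \<bullet> G x) = (\<lambda>t. 0)"
    by (rule has_derivative_unique)
  from fun_cong[OF this, of 1] show ?thesis by simp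
qed

lemma scale_invariant_gradient_scaleR:
  fixes L :: "'a::euclidean_space \<Rightarrow> real"
  assumes C: "C2_on (- {0}) L G H" and si: "scale_invariant L" and y: "y \<noteq> 0" and c: "c > 0"
  shows "G (c *\<^sub>R y) = (1 / c) *\<^sub>R G y"
proof -
  have scale: "((\<lambda>z. c *\<^sub>R z) has_derivative (\<lambda>h. c *\<^sub>R h)) (at y)"
    by (auto intro!: derivative_eq_intros)
  have "((\<lambda>z. L (c *\<^sub>R z)) has_derivative (\<lambda>h. (c *\<^sub>R h) \<bullet> G (c *\<^sub>R y))) (at y)"
    using has_derivative_compose[OF scale C2_on_gradient[OF C]] y c by simp
  moreover have "((\<lambda>z. L (c *\<^sub>R z)) has_derivative (\<lambda>h. h \<bullet> G y)) (at y)"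
    by (rule has_derivative_transform_within_open[OF C2_on_gradient[OF C], of y "- {0}"])
      (use y si c in \<open>auto simp: scale_invariant_def\<close>)
  ultimately have "(\<lambda>h. (c *\<^sub>R h) \<bullet> G (c *\<^sub>R y)) = (\<lambda>h. h \<bullet> G y)"
    by (rule has_derivative_unique)
  then have "h \<bullet> (c *\<^sub>R G (c *\<^sub>R y)) = h \<bullet> G y" for h
    by (metis inner_scaleR_left inner_scaleR_right)
  then have "c *\<^sub>R G (c *\<^sub>R y) = G y"
    using vector_eq_ldot by blast
  then have "(1 / c) *\<^sub>R (c *\<^sub>R G (c *\<^sub>R y)) = (1 / c) *\<^sub>R G y"
    by simp
  then show ?thesis
    using c by simp
qed

lemma scale_invariant_hessian_scaleR:
  fixes L :: "'a::euclidean_space \<Rightarrow> real"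
  assumes C: "C2_on (- {0}) L G H" and si: "scale_invariant L" and y: "y \<noteq> 0" and c: "c > 0"
  shows "H (c *\<^sub>R y) = (1 / c\<^sup>2) *\<^sub>R H y"
proof -
  have scale: "((\<lambda>z. c *\<^sub>R z) has_derivative (\<lambda>h. c *\<^sub>R h)) (at y)"
    by (auto intro!: derivative_eq_intros)
  have "((\<lambda>z. G (c *\<^sub>R z)) has_derivative (\<lambda>h. H (c *\<^sub>R y) (c *\<^sub>R h))) (at y)"
    using has_derivative_compose[OF scale C2_on_hessian[OF C]] y c by simp
  moreover have "((\<lambda>z. G (c *\<^sub>R z)) has_derivative (\<lambda>h. (1 / c) *\<^sub>R H y h)) (at y)"
  proof (rule has_derivative_transform_within_open[where s = "- {0}"])
    show "((\<lambda>z. (1 / c) *\<^sub>R G z) has_derivative (\<lambda>h. (1 / c) *\<^sub>R H y h)) (at y)"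
      using C2_on_hessian[OF C] y by (auto intro!: derivative_eq_intros)
  qed (use y in \<open>auto simp: scale_invariant_gradient_scaleR[OF C si _ c]\<close>)
  ultimately have scaled: "H (c *\<^sub>R y) (c *\<^sub>R h) = (1 / c) *\<^sub>R H y h" for h
    by (metis has_derivative_unique)
  show ?thesis
  proof (rule blinfun_eqI)
    fix h
    have "H (c *\<^sub>R y) h = H (c *\<^sub>R y) (c *\<^sub>R ((1 / c) *\<^sub>R h))" using c by simp
    also have "\<dots> = (1 / c) *\<^sub>R H y ((1 / c) *\<^sub>R h)" by (rule scaled)
    also have "\<dots> = ((1 / c\<^sup>2) *\<^sub>R H y) h"
      by (simp add: blinfun.scaleR_right blinfun.scaleR_left power2_eq_square)
    finally show "H (c *\<^sub>R y) h = ((1 / c\<^sup>2) *\<^sub>R H y) h" .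
  qed
qed

lemma C2_on_bdd_above_hessian_sphere:
  assumes "C2_on (- {0}) L G H"
  shows "bdd_above ((\<lambda>x. norm (H x)) ` sphere 0 1)"
proof -
  have "continuous_on (sphere 0 1) H"
    using assms unfolding C2_on_def by (auto elim: continuous_on_subset)
  then have "continuous_on (sphere 0 1) (\<lambda>x. norm (H x))"
    by (intro continuous_intros)
  then show ?thesis
    by (intro bounded_imp_bdd_above compact_imp_bounded compact_continuous_image) auto
qed

lemma norm_hessian_le_hess_bound:
  assumes "C2_on (- {0}) L G H" "u \<in> sphere 0 1"
  shows "norm (H u) \<le> hess_bound H"
  unfolding hess_bound_def
  by (rule cSup_upper) (use assms C2_on_bdd_above_hessian_sphere in auto)

lemma hess_bound_nonneg:
  fixes H :: "'a::euclidean_space \<Rightarrow> 'a \<Rightarrow>\<^sub>L 'a"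
  assumes "C2_on (- {0}) L G H"
  shows "0 \<le> hess_bound H"
proof -
  obtain b :: 'a where "b \<in> Basis" using nonempty_Basis by blast
  then have "norm (H b) \<le> hess_bound H"
    using norm_hessian_le_hess_bound[OF assms] by auto
  then show ?thesis by (meson norm_ge_zero order_trans)
qed

lemma scale_invariant_norm_hessian_le:
  fixes L :: "'a::euclidean_space \<Rightarrow> real"
  assumes C: "C2_on (- {0}) L G H" and si: "scale_invariant L" and y: "y \<noteq> 0"
  shows "norm (H y) \<le> hess_bound H / (norm y)\<^sup>2"
proof -
  define u where "u = (1 / norm y) *\<^sub>R y"
  have u: "u \<in> sphere 0 1" "u \<noteq> 0" and y_eq: "y = norm y *\<^sub>R u"
    using y by (auto simp: u_def)
  have "norm (H y) = norm (H u) / (norm y)\<^sup>2"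
    using scale_invariant_hessian_scaleR[OF C si u(2), of "norm y"] y y_eq by simp
  then show ?thesis
    using norm_hessian_le_hess_bound[OF C u(1)] by (simp add: divide_right_mono)
qed

lemma scale_invariant_gradient_step_nonzero:
  fixes L :: "'a::euclidean_space \<Rightarrow> real"
  assumes "C2_on (- {0}) L G H" "scale_invariant L" "x \<noteq> 0"
  shows "x + t *\<^sub>R G x \<noteq> 0"
  using norm_le_norm_add_orthogonal[of x "t *\<^sub>R G x"] scale_invariant_gradient_orthogonal[OF assms]
  by (auto simp: orthogonal_def assms(3))

lemma scale_invariant_gradient_step_decrease:
  fixes L :: "'a::euclidean_space \<Rightarrow> real"
  assumes C: "C2_on (- {0}) L G H" and si: "scale_invariant L" and x: "x \<noteq> 0"
  shows "L x - L (x - e *\<^sub>R G x)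
    \<ge> e * (norm (G x))\<^sup>2 - hess_bound H * e\<^sup>2 * (norm (G x))\<^sup>2 / (2 * (norm x)\<^sup>2)"
proof -
  define v where "v = - e *\<^sub>R G x"
  have far: "norm x \<le> norm (x + t *\<^sub>R v)" for t
    using norm_le_norm_add_orthogonal[of x "t *\<^sub>R v"] scale_invariant_gradient_orthogonal[OF C si x]
    by (simp add: v_def orthogonal_def)
  have nonzero: "x + t *\<^sub>R v \<noteq> 0" for t
    using scale_invariant_gradient_step_nonzero[OF C si x, of "- t * e"] by (simp add: v_def)
  have "norm (H (x + t *\<^sub>R v)) \<le> hess_bound H / (norm x)\<^sup>2" for t
  proof -
    have "(norm x)\<^sup>2 \<le> (norm (x + t *\<^sub>R v))\<^sup>2" using far by (simp add: power_mono)
    then have "hess_bound H / (norm (x + t *\<^sub>R v))\<^sup>2 \<le> hess_bound H / (norm x)\<^sup>2"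
      using hess_bound_nonneg[OF C] x nonzero[of t] by (intro divide_left_mono) auto
    then show ?thesis
      using scale_invariant_norm_hessian_le[OF C si nonzero[of t]] by linarith
  qed
  then have "L (x + v) \<le> L x + G x \<bullet> v + hess_bound H / (norm x)\<^sup>2 / 2 * (norm v)\<^sup>2"
    by (intro second_order_Taylor_upper_bound[where G = G and H = H]
        C2_on_gradient[OF C] C2_on_hessian[OF C]) (auto simp: nonzero)
  then show ?thesis
    by (simp add: v_def power2_norm_eq_inner power_mult_distrib algebra_simps)
qed

lemma descent_bound_relaxation:
  fixes eta e rho s q :: real
  assumes "eta \<le> e" "e \<le> 2 * eta" "0 < eta" "0 \<le> rho" "0 < s" "0 \<le> q"
  shows "eta * (1 - 2 * rho * eta / s) * q \<le> e * q - rho * e\<^sup>2 * q / (2 * s)"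
proof -
  have "e\<^sup>2 \<le> (2 * eta)\<^sup>2" using assms by (intro power_mono) auto
  then have "rho * e\<^sup>2 * q / (2 * s) \<le> rho * (2 * eta)\<^sup>2 * q / (2 * s)"
    using assms by (intro divide_right_mono mult_right_mono mult_left_mono) auto
  moreover have "eta * q \<le> e * q" using assms by (intro mult_right_mono)
  moreover have "eta * (1 - 2 * rho * eta / s) * q = eta * q - rho * (2 * eta)\<^sup>2 * q / (2 * s)"
    using assms by (simp add: field_simps power2_eq_square)
  ultimately show ?thesis by linarith
qed

theorem mainTheorem2:
  fixes L :: "'a::euclidean_space \<Rightarrow> real" and G :: "'a \<Rightarrow> 'a" and H :: "'a \<Rightarrow> 'a \<Rightarrow>\<^sub>L 'a"
    and eta lam :: real and x x' :: 'a
  assumes "C2_on (- {0}) L G H"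
    and "scale_invariant L"
    and "eta > 0" and "lam > 0" and "eta * lam < 1"
    and "x \<noteq> 0"
    and "x' = (1 - eta * lam) *\<^sub>R x - eta *\<^sub>R G x"
  shows "L x - L x' \<ge> eta * (1 / (1 - eta * lam)
            - hess_bound H * eta / (2 * (norm x)^2 * (1 - eta * lam)^2)) * (norm (G x))^2
       \<and> (eta * lam \<le> 1/2 \<longrightarrow>
            L x - L x' \<ge> eta * (1 - 2 * hess_bound H * eta / (norm x)^2) * (norm (G x))^2)"
proof -
  note C = assms(1) and si = assms(2)
  define k where "k = 1 - eta * lam"
  define e where "e = eta / k"
  have k: "0 < k" "k \<le> 1" using assms(3-5) by (simp_all add: k_def)
  have "k * e = eta" using k by (simp add: e_def)
  then have "x' = k *\<^sub>R (x - e *\<^sub>R G x)"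
    using assms(7) by (simp add: k_def scaleR_diff_right)
  then have "L x' = L (x - e *\<^sub>R G x)"
    using si k(1) scale_invariant_gradient_step_nonzero[OF C si assms(6), of "- e"]
    by (simp add: scale_invariant_def)
  then have decrease: "L x - L x'
      \<ge> e * (norm (G x))\<^sup>2 - hess_bound H * e\<^sup>2 * (norm (G x))\<^sup>2 / (2 * (norm x)\<^sup>2)"
    using scale_invariant_gradient_step_decrease[OF C si assms(6)] by simp
  have "eta * (1 / k - hess_bound H * eta / (2 * (norm x)\<^sup>2 * k\<^sup>2)) * (norm (G x))\<^sup>2
      = e * (norm (G x))\<^sup>2 - hess_bound H * e\<^sup>2 * (norm (G x))\<^sup>2 / (2 * (norm x)\<^sup>2)"
    by (simp add: e_def power_divide algebra_simps power2_eq_square)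
  moreover have "eta * (1 - 2 * hess_bound H * eta / (norm x)\<^sup>2) * (norm (G x))\<^sup>2
      \<le> e * (norm (G x))\<^sup>2 - hess_bound H * e\<^sup>2 * (norm (G x))\<^sup>2 / (2 * (norm x)\<^sup>2)"
    if "eta * lam \<le> 1/2"
  proof (rule descent_bound_relaxation)
    show "eta \<le> e" "e \<le> 2 * eta"
      using that k assms(3) by (simp_all add: e_def k_def pos_le_divide_eq pos_divide_le_eq)
  qed (use assms(3,6) hess_bound_nonneg[OF C] in auto)
  ultimately show ?thesis
    using decrease unfolding k_def by auto
qed

end
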